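(* Let $((\mathfrak g,E),(\mathfrak h,F);\rho,\mu)$ be a matched pair of ENL algebras. Then $(\mathfrak g_E,\mathfrak h_F;\rho_{(E,F)},\mu_{(E,F)})$ is a matched pair of Lie algebras, where $\rho_{(E,F)}(x)\xi=\rho(Ex)\xi$ and $\mu_{(E,F)}(\xi)x=\mu(F\xi)x$ for $x\in\mathfrak g,\xi\in\mathfrak h$. Moreover, there is a canonical Lie algebra isomorphism $\mathfrak g_E\bowtie\mathfrak h_F\cong(\mathfrak g\bowtie\mathfrak h)_{E\oplus F}$.
   Context: All vector spaces are finite-dimensional over an algebraically closed field of characteristic zero. An ENL algebra $(\mathfrak g,[\cdot,\cdot]_{\mathfrak g},E)$ is a Lie algebra with a linear map $E$ such that $E[x,y]_{\mathfrak g}=[x,Ey]_{\mathfrak g}$ for all $x,y$ (equivalently $E[x,y]_{\mathfrak g}=[Ex,y]_{\mathfrak g}$); its deformed Lie algebra $\mathfrak g_E$ is $\mathfrak g$ with bracket $[x,y]_E:=[Ex,y]_{\mathfrak g}$. A matched pair of Lie algebras $(\mathfrak g,\mathfrak h;\rho,\mu)$: Lie algebras $\mathfrak g,\mathfrak h$ with representations $\rho:\mathfrak g\to\mathfrak{gl}(\mathfrak h)$, $\mu:\mathfrak h\to\mathfrak{gl}(\mathfrak g)$ such that $\rho(x)[\xi,\eta]_{\mathfrak h}=[\rho(x)\xi,\eta]_{\mathfrak h}+[\xi,\rho(x)\eta]_{\mathfrak h}+\rho(\mu(\eta)x)\xi-\rho(\mu(\xi)x)\eta$ and $\mu(\xi)[x,y]_{\mathfrak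 g}=[\mu(\xi)x,y]_{\mathfrak g}+[x,\mu(\xi)y]_{\mathfrak g}+\mu(\rho(y)\xi)x-\mu(\rho(x)\xi)y$. Its bicrossed product $\mathfrak g\bowtie\mathfrak h$ is $\mathfrak g\oplus\mathfrak h$ with the Lie bracket $[x+\xi,y+\eta]_{\bowtie}=([x,y]_{\mathfrak g}+\mu(\xi)y-\mu(\eta)x)+([\xi,\eta]_{\mathfrak h}+\rho(x)\eta-\rho(y)\xi)$. For ENL algebras $(\mathfrak g,E),(\mathfrak h,F)$, a matched pair of ENL algebras $((\mathfrak g,E),(\mathfrak h,F);\rho,\mu)$ is a matched pair of Lie algebras with $F(\rho(x)\xi)=\rho(Ex)\xi=\rho(x)(F\xi)$ and $E(\mu(\xi)x)=\mu(F\xi)x=\mu(\xi)(Ex)$ for all $x,\xi$. In that case $E\oplus F:x+\xi\mapsto Ex+F\xi$ makes $\mathfrak g\bowtie\mathfrak h$ an ENL algebra, and $(\mathfrak g\bowtie\mathfrak h)_{E\oplus F}$ denotes $\mathfrak g\oplus\mathfrak h$ with bracket $[u,v]_{E\oplus F}=[(E\oplus F)u,v]_{\bowtie}$. *)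

theory Defs
  imports "HOL-Computational_Algebra.Polynomial" "HOL-Library.Product_Plus"
begin

text \<open>Standing assumptions: the ground field is algebraically closed of characteristic zero
(characteristic zero via the class field_char_0), all spaces are finite-dimensional.\<close>

definition alg_closed_field :: "'k::field itself \<Rightarrow> bool" where
  "alg_closed_field _ \<longleftrightarrow> (\<forall>p::'k poly. degree p > 0 \<longrightarrow> (\<exists>x. poly p x = 0))"

definition fin_dim_vs :: "('k::field \<Rightarrow> 'v::ab_group_add \<Rightarrow> 'v) \<Rightarrow> bool" where
  "fin_dim_vs sc \<longleftrightarrow> (\<exists>B. finite_dimensional_vector_space sc B)"

definition lie_algebra ::
  "('k::field \<Rightarrow> 'v::ab_group_add \<Rightarrow> 'v) \<Rightarrow> ('v \<Rightarrow> 'v \<Rightarrow> 'v) \<Rightarrow> bool" where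
  "lie_algebra sc br \<longleftrightarrow> vector_space sc
     \<and> (\<forall>x. Vector_Spaces.linear sc sc (br x))
     \<and> (\<forall>y. Vector_Spaces.linear sc sc (\<lambda>x. br x y))
     \<and> (\<forall>x. br x x = 0)
     \<and> (\<forall>x y z. br x (br y z) + br y (br z x) + br z (br x y) = 0)"

definition lie_rep ::
  "('k::field \<Rightarrow> 'g::ab_group_add \<Rightarrow> 'g) \<Rightarrow> ('g \<Rightarrow> 'g \<Rightarrow> 'g) \<Rightarrow>
   ('k \<Rightarrow> 'v::ab_group_add \<Rightarrow> 'v) \<Rightarrow> ('g \<Rightarrow> 'v \<Rightarrow> 'v) \<Rightarrow> bool" where
  "lie_rep scg brg scv r \<longleftrightarrow>
     (\<forall>x. Vector_Spaces.linear scv scv (r x))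
     \<and> (\<forall>v. Vector_Spaces.linear scg scv (\<lambda>x. r x v))
     \<and> (\<forall>x y v. r (brg x y) v = r x (r y v) - r y (r x v))"

definition ENL_algebra ::
  "('k::field \<Rightarrow> 'g::ab_group_add \<Rightarrow> 'g) \<Rightarrow> ('g \<Rightarrow> 'g \<Rightarrow> 'g) \<Rightarrow> ('g \<Rightarrow> 'g) \<Rightarrow> bool" where
  "ENL_algebra sc br E \<longleftrightarrow> lie_algebra sc br \<and> Vector_Spaces.linear sc sc E
     \<and> (\<forall>x y. E (br x y) = br x (E y))"

definition deformed :: "('g \<Rightarrow> 'g \<Rightarrow> 'g) \<Rightarrow> ('g \<Rightarrow> 'g) \<Rightarrow> 'g \<Rightarrow> 'g \<Rightarrow> 'g" where
  "deformed br E x y = br (E x) y"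

definition matched_pair ::
  "('k::field \<Rightarrow> 'g::ab_group_add \<Rightarrow> 'g) \<Rightarrow> ('g \<Rightarrow> 'g \<Rightarrow> 'g) \<Rightarrow>
   ('k \<Rightarrow> 'h::ab_group_add \<Rightarrow> 'h) \<Rightarrow> ('h \<Rightarrow> 'h \<Rightarrow> 'h) \<Rightarrow>
   ('g \<Rightarrow> 'h \<Rightarrow> 'h) \<Rightarrow> ('h \<Rightarrow> 'g \<Rightarrow> 'g) \<Rightarrow> bool" where
  "matched_pair scg brg sch brh \<rho> \<mu> \<longleftrightarrow>
     lie_algebra scg brg \<and> lie_algebra sch brh
     \<and> lie_rep scg brg sch \<rho> \<and> lie_rep sch brh scg \<mu>
     \<and> (\<forall>x \<xi> \<eta>. \<rho> x (brh \<xi> \<eta>) =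
          brh (\<rho> x \<xi>) \<eta> + brh \<xi> (\<rho> x \<eta>) + \<rho> (\<mu> \<eta> x) \<xi> - \<rho> (\<mu> \<xi> x) \<eta>)
     \<and> (\<forall>\<xi> x y. \<mu> \<xi> (brg x y) =
          brg (\<mu> \<xi> x) y + brg x (\<mu> \<xi> y) + \<mu> (\<rho> y \<xi>) x - \<mu> (\<rho> x \<xi>) y)"

definition matched_pair_ENL ::
  "('k::field \<Rightarrow> 'g::ab_group_add \<Rightarrow> 'g) \<Rightarrow> ('g \<Rightarrow> 'g \<Rightarrow> 'g) \<Rightarrow> ('g \<Rightarrow> 'g) \<Rightarrow>
   ('k \<Rightarrow> 'h::ab_group_add \<Rightarrow> 'h) \<Rightarrow> ('h \<Rightarrow> 'h \<Rightarrow> 'h) \<Rightarrow> ('h \<Rightarrow> 'h) \<Rightarrow>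
   ('g \<Rightarrow> 'h \<Rightarrow> 'h) \<Rightarrow> ('h \<Rightarrow> 'g \<Rightarrow> 'g) \<Rightarrow> bool" where
  "matched_pair_ENL scg brg E sch brh F \<rho> \<mu> \<longleftrightarrow>
     ENL_algebra scg brg E \<and> ENL_algebra sch brh F
     \<and> matched_pair scg brg sch brh \<rho> \<mu>
     \<and> (\<forall>x \<xi>. F (\<rho> x \<xi>) = \<rho> (E x) \<xi> \<and> \<rho> (E x) \<xi> = \<rho> x (F \<xi>))
     \<and> (\<forall>x \<xi>. E (\<mu> \<xi> x) = \<mu> (F \<xi>) x \<and> \<mu> (F \<xi>) x = \<mu> \<xi> (E x))"

definition sum_scale :: "('k \<Rightarrow> 'g \<Rightarrow> 'g) \<Rightarrow> ('k \<Rightarrow> 'h \<Rightarrow> 'h) \<Rightarrow> 'k \<Rightarrow> 'g \<times> 'h \<Rightarrow> 'g \<times> 'h" where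
  "sum_scale scg sch c u = (scg c (fst u), sch c (snd u))"

definition bicrossed ::
  "('g::ab_group_add \<Rightarrow> 'g \<Rightarrow> 'g) \<Rightarrow> ('h::ab_group_add \<Rightarrow> 'h \<Rightarrow> 'h) \<Rightarrow>
   ('g \<Rightarrow> 'h \<Rightarrow> 'h) \<Rightarrow> ('h \<Rightarrow> 'g \<Rightarrow> 'g) \<Rightarrow> 'g \<times> 'h \<Rightarrow> 'g \<times> 'h \<Rightarrow> 'g \<times> 'h" where
  "bicrossed brg brh \<rho> \<mu> u v =
     (let (x, \<xi>) = u; (y, \<eta>) = v in
      (brg x y + \<mu> \<xi> y - \<mu> \<eta> x, brh \<xi> \<eta> + \<rho> x \<eta> - \<rho> y \<xi>))"

definition sum_map :: "('g \<Rightarrow> 'g) \<Rightarrow> ('h \<Rightarrow> 'h) \<Rightarrow> 'g \<times> 'h \<Rightarrow> 'g \<times> 'h" where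
  "sum_map E F u = (E (fst u), F (snd u))"

definition lie_algebra_iso ::
  "('k::field \<Rightarrow> 'a::ab_group_add \<Rightarrow> 'a) \<Rightarrow> ('a \<Rightarrow> 'a \<Rightarrow> 'a) \<Rightarrow>
   ('k \<Rightarrow> 'b::ab_group_add \<Rightarrow> 'b) \<Rightarrow> ('b \<Rightarrow> 'b \<Rightarrow> 'b) \<Rightarrow> ('a \<Rightarrow> 'b) \<Rightarrow> bool" where
  "lie_algebra_iso sca bra scb brb f \<longleftrightarrow>
     lie_algebra sca bra \<and> lie_algebra scb brb \<and> Vector_Spaces.linear sca scb f \<and> bij f
     \<and> (\<forall>x y. f (bra x y) = brb (f x) (f y))"

end

(*
  In an ENL algebra E[x,y] = [x,Ey] = [Ex,y] by antisymmetry, so the deformed bracket is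
  [x,y]_E = E[x,y]; its Jacobiator is E^2 applied to the Jacobiator of [.,.], and E is a Lie
  algebra morphism from g_E to g. Hence rho o E and mu o F are representations of g_E and h_F,
  and the compatibility conditions of the deformed pair reduce to those of (g,h;rho,mu) once
  E and F are moved through rho and mu. Moved the same way, the bicrossed bracket of the
  deformed pair is literally the (E + F)-deformation of the bicrossed bracket, so the
  isomorphism is the identity. What remains is that the bicrossed product of any matched pair
  is a Lie algebra; its Jacobi identity need only be checked on the g-component, since the
  h-component is the g-component for the swapped matched pair (h,g;mu,rho).
*)
theory Submission
  imports Defs
begin

lemma bilinear_distribs:
  assumes "\<And>y. Vector_Spaces.linear s1 s3 (\<lambda>x. b x y)"
    and "\<And>x. Vector_Spaces.linear s2 s3 (b x)"
  shows "b (x + x') y = b x y + b x' y" "b x (y + y') = b x y + b x y'"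
    "b (x - x') y = b x y - b x' y" "b x (y - y') = b x y - b x y'"
    "b (- x) y = - b x y" "b x (- y) = - b x y"
    "b 0 y = 0" "b x 0 = 0"
    "b (s1 c x) y = s3 c (b x y)" "b x (s2 c y) = s3 c (b x y)"
proof -
  have l: "module_hom s1 s3 (\<lambda>x. b x y)" and r: "module_hom s2 s3 (b x)" for x y
    using assms by (simp_all add: module_hom_iff_linear)
  show "b (x + x') y = b x y + b x' y" "b x (y + y') = b x y + b x y'"
    "b (x - x') y = b x y - b x' y" "b x (y - y') = b x y - b x y'"
    "b (- x) y = - b x y" "b x (- y) = - b x y"
    "b 0 y = 0" "b x 0 = 0"
    "b (s1 c x) y = s3 c (b x y)" "b x (s2 c y) = s3 c (b x y)"
    by (simp_all add: module_hom.add[OF l] module_hom.add[OF r] module_hom.diff[OF l]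
        module_hom.diff[OF r] module_hom.neg[OF l] module_hom.neg[OF r] module_hom.zero[OF l]
        module_hom.zero[OF r] module_hom.scale[OF l] module_hom.scale[OF r])
qed

lemma lie_algebra_bracket_distribs:
  assumes "lie_algebra sc br"
  shows "br (x + x') y = br x y + br x' y" "br x (y + y') = br x y + br x y'"
    "br (x - x') y = br x y - br x' y" "br x (y - y') = br x y - br x y'"
    "br (- x) y = - br x y" "br x (- y) = - br x y"
    "br 0 y = 0" "br x 0 = 0"
    "br (sc c x) y = sc c (br x y)" "br x (sc c y) = sc c (br x y)"
  using assms unfolding lie_algebra_def by (blast intro: bilinear_distribs)+

lemma lie_algebra_anticomm:
  assumes "lie_algebra sc br"
  shows "br y x = - br x y"
proof -
  have "br (x + y) (x + y) = 0" and "br x x = 0" and "br y y = 0"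
    using assms by (simp_all add: lie_algebra_def)
  then have "br y x + br x y = 0"
    by (simp add: lie_algebra_bracket_distribs[OF assms])
  then show ?thesis
    by (simp add: eq_neg_iff_add_eq_0)
qed

lemma lie_rep_distribs:
  assumes "lie_rep scg brg scv r"
  shows "r (x + x') v = r x v + r x' v" "r x (v + v') = r x v + r x v'"
    "r (x - x') v = r x v - r x' v" "r x (v - v') = r x v - r x v'"
    "r (- x) v = - r x v" "r x (- v) = - r x v"
    "r 0 v = 0" "r x 0 = 0"
    "r (scg c x) v = scv c (r x v)" "r x (scv c v) = scv c (r x v)"
  using assms unfolding lie_rep_def by (blast intro: bilinear_distribs)+

definition jacobiator :: "('a::ab_group_add \<Rightarrow> 'a \<Rightarrow> 'a) \<Rightarrow> 'a \<Rightarrow> 'a \<Rightarrow> 'a \<Rightarrow> 'a" where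
  "jacobiator br x y z = br x (br y z) + br y (br z x) + br z (br x y)"

lemma lie_algebra_jacobiator: "lie_algebra sc br \<Longrightarrow> jacobiator br x y z = 0"
  by (simp add: lie_algebra_def jacobiator_def)

lemma fst_jacobiator_bicrossed:
  assumes "matched_pair scg brg sch brh \<rho> \<mu>"
  shows "fst (jacobiator (bicrossed brg brh \<rho> \<mu>) u v w) = 0"
proof -
  obtain x \<xi> y \<eta> z \<zeta> where uvw: "u = (x, \<xi>)" "v = (y, \<eta>)" "w = (z, \<zeta>)"
    by (cases u, cases v, cases w) blast
  have g: "lie_algebra scg brg" and \<mu>: "lie_rep sch brh scg \<mu>"
    and \<mu>_bracket: "\<And>\<xi> x y. \<mu> \<xi> (brg x y) =
          brg (\<mu> \<xi> x) y + brg x (\<mu> \<xi> y) + \<mu> (\<rho> y \<xi>) x - \<mu> (\<rho> x \<xi>) y"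
    using assms by (simp_all add: matched_pair_def)
  have \<mu>_rep: "\<mu> (brh \<xi> \<eta>) x = \<mu> \<xi> (\<mu> \<eta> x) - \<mu> \<eta> (\<mu> \<xi> x)" for \<xi> \<eta> x
    using \<mu> by (simp add: lie_rep_def)
  \<comment> \<open>the brackets [\<mu> \<eta> z, x] produced by \<mu>_bracket cancel against [x, \<mu> \<eta> z] only
      after antisymmetry\<close>
  have "fst (jacobiator (bicrossed brg brh \<rho> \<mu>) u v w) = jacobiator brg x y z"
    unfolding uvw jacobiator_def bicrossed_def
    by (simp add: lie_algebra_bracket_distribs[OF g] lie_rep_distribs[OF \<mu>] \<mu>_bracket \<mu>_rep
        lie_algebra_anticomm[OF g, of "\<mu> \<eta> z" x] lie_algebra_anticomm[OF g, of "\<mu> \<xi> y" z]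
        lie_algebra_anticomm[OF g, of "\<mu> \<zeta> x" y])
  then show ?thesis
    by (simp add: lie_algebra_jacobiator[OF g])
qed

lemma matched_pair_swap:
  "matched_pair scg brg sch brh \<rho> \<mu> \<Longrightarrow> matched_pair sch brh scg brg \<mu> \<rho>"
  by (simp add: matched_pair_def)

lemma bicrossed_swap:
  "bicrossed brh brg \<mu> \<rho> (prod.swap u) (prod.swap v) = prod.swap (bicrossed brg brh \<rho> \<mu> u v)"
  by (simp add: bicrossed_def split: prod.splits)

lemma jacobiator_bicrossed:
  assumes "matched_pair scg brg sch brh \<rho> \<mu>"
  shows "jacobiator (bicrossed brg brh \<rho> \<mu>) u v w = 0"
proof (rule prod_eqI)
  show "fst (jacobiator (bicrossed brg brh \<rho> \<mu>) u v w) = fst 0"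
    using fst_jacobiator_bicrossed[OF assms] by simp
  have "snd (jacobiator (bicrossed brg brh \<rho> \<mu>) u v w)
      = fst (jacobiator (bicrossed brh brg \<mu> \<rho>) (prod.swap u) (prod.swap v) (prod.swap w))"
    by (simp add: jacobiator_def bicrossed_swap)
  then show "snd (jacobiator (bicrossed brg brh \<rho> \<mu>) u v w) = snd 0"
    using fst_jacobiator_bicrossed[OF matched_pair_swap[OF assms]] by simp
qed

lemma vector_space_sum_scale:
  "vector_space scg \<Longrightarrow> vector_space sch \<Longrightarrow> vector_space (sum_scale scg sch)"
  unfolding vector_space_def sum_scale_def by (simp add: add_Pair)

lemma bicrossed_lie_algebra:
  assumes "matched_pair scg brg sch brh \<rho> \<mu>"
  shows "lie_algebra (sum_scale scg sch) (bicrossed brg brh \<rho> \<mu>)"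
proof -
  have g: "lie_algebra scg brg" and h: "lie_algebra sch brh"
    and \<rho>: "lie_rep scg brg sch \<rho>" and \<mu>: "lie_rep sch brh scg \<mu>"
    using assms by (simp_all add: matched_pair_def)
  have vs: "vector_space scg" "vector_space sch"
    using g h by (simp_all add: lie_algebra_def)
  note distribs = lie_algebra_bracket_distribs[OF g] lie_algebra_bracket_distribs[OF h]
    lie_rep_distribs[OF \<rho>] lie_rep_distribs[OF \<mu>]
  have modules: "module scg" "module sch"
    using vs by (simp_all add: module_iff_vector_space)
  note scale_distribs = module.scale_right_distrib[OF modules(1)]
    module.scale_right_diff_distrib[OF modules(1)]
    module.scale_right_distrib[OF modules(2)] module.scale_right_diff_distrib[OF modules(2)]
  show ?thesis
    unfolding lie_algebra_def
  proof (intro conjI allI)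
    show "vector_space (sum_scale scg sch)"
      using vector_space_sum_scale[OF vs] .
    show "Vector_Spaces.linear (sum_scale scg sch) (sum_scale scg sch) (bicrossed brg brh \<rho> \<mu> u)" for u
      using vector_space_sum_scale[OF vs]
      by (auto simp: Vector_Spaces.linear_iff bicrossed_def sum_scale_def distribs scale_distribs
          split: prod.splits)
    show "Vector_Spaces.linear (sum_scale scg sch) (sum_scale scg sch) (\<lambda>u. bicrossed brg brh \<rho> \<mu> u v)" for v
      using vector_space_sum_scale[OF vs]
      by (auto simp: Vector_Spaces.linear_iff bicrossed_def sum_scale_def distribs scale_distribs
          split: prod.splits)
    show "bicrossed brg brh \<rho> \<mu> u u = 0" for u
      using g h by (simp add: bicrossed_def lie_algebra_def zero_prod_def split: prod.splits)
    show "bicrossed brg brh \<rho> \<mu> u (bicrossed brg brh \<rho> \<mu> v w)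
        + bicrossed brg brh \<rho> \<mu> v (bicrossed brg brh \<rho> \<mu> w u)
        + bicrossed brg brh \<rho> \<mu> w (bicrossed brg brh \<rho> \<mu> u v) = 0" for u v w
      using jacobiator_bicrossed[OF assms] by (simp add: jacobiator_def)
  qed
qed

lemma ENL_algebra_bracket_left:
  assumes "ENL_algebra sc br E"
  shows "br (E x) y = E (br x y)"
proof -
  have g: "lie_algebra sc br" and E: "Vector_Spaces.linear sc sc E"
    and E_bracket: "E (br y x) = br y (E x)"
    using assms by (simp_all add: ENL_algebra_def)
  have "br (E x) y = - br y (E x)"
    by (rule lie_algebra_anticomm[OF g])
  also have "\<dots> = - E (br y x)"
    by (simp add: E_bracket)
  also have "\<dots> = E (br x y)"
    by (simp add: lie_algebra_anticomm[OF g, of y x] module_hom.neg[OF E[folded module_hom_iff_linear]])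
  finally show ?thesis .
qed

lemma ENL_algebra_deformed_lie_algebra:
  assumes "ENL_algebra sc br E"
  shows "lie_algebra sc (deformed br E)"
proof -
  have g: "lie_algebra sc br" and E: "Vector_Spaces.linear sc sc E"
    and E_bracket: "\<And>x y. E (br x y) = br x (E y)"
    using assms by (simp_all add: ENL_algebra_def)
  have deformed: "deformed br E x y = E (br x y)" for x y
    by (simp add: deformed_def ENL_algebra_bracket_left[OF assms])
  have E_hom: "module_hom sc sc E"
    using E by (simp add: module_hom_iff_linear)
  show ?thesis
    unfolding lie_algebra_def
  proof (intro conjI allI)
    show "vector_space sc"
      using g by (simp add: lie_algebra_def)
    show "Vector_Spaces.linear sc sc (deformed br E x)" for x
      using g by (simp add: lie_algebra_def deformed_def[abs_def])
    show "Vector_Spaces.linear sc sc (\<lambda>x. deformed br E x y)" for y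
      using Vector_Spaces.linear_compose[OF E, of sc "\<lambda>x. br x y"] g
      by (simp add: lie_algebra_def deformed_def o_def)
    show "deformed br E x x = 0" for x
      using g by (simp add: deformed lie_algebra_def module_hom.zero[OF E_hom])
    show "deformed br E x (deformed br E y z) + deformed br E y (deformed br E z x)
        + deformed br E z (deformed br E x y) = 0" for x y z
    proof -
      have nested: "deformed br E a (deformed br E b c) = E (E (br a (br b c)))" for a b c
        by (simp add: deformed E_bracket[symmetric])
      show ?thesis
        using lie_algebra_jacobiator[OF g, of x y z]
        by (simp add: nested jacobiator_def module_hom.add[OF E_hom, symmetric]
            module_hom.zero[OF E_hom])
    qed
  qed
qed

lemma lie_rep_comp_lie_hom:
  assumes r: "lie_rep sc br scv r" and \<phi>: "Vector_Spaces.linear sc sc \<phi>"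
    and \<phi>_bracket: "\<And>x y. \<phi> (br' x y) = br (\<phi> x) (\<phi> y)"
  shows "lie_rep sc br' scv (\<lambda>x. r (\<phi> x))"
  unfolding lie_rep_def
proof (intro conjI allI)
  show "Vector_Spaces.linear scv scv (r (\<phi> x))" for x
    using r by (simp add: lie_rep_def)
  show "Vector_Spaces.linear sc scv (\<lambda>x. r (\<phi> x) v)" for v
    using Vector_Spaces.linear_compose[OF \<phi>, of scv "\<lambda>x. r x v"] r
    by (simp add: lie_rep_def o_def)
  show "r (\<phi> (br' x y)) v = r (\<phi> x) (r (\<phi> y) v) - r (\<phi> y) (r (\<phi> x) v)" for x y v
    using r by (simp add: lie_rep_def \<phi>_bracket)
qed

text \<open>Oriented to pull E and F outwards, which gives \<open>simp\<close> a normal form.\<close>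

lemma matched_pair_ENL_compat:
  assumes "matched_pair_ENL scg brg E sch brh F \<rho> \<mu>"
  shows "\<rho> x (F \<xi>) = F (\<rho> x \<xi>)" "\<rho> (E x) \<xi> = F (\<rho> x \<xi>)"
    "\<mu> \<xi> (E x) = E (\<mu> \<xi> x)" "\<mu> (F \<xi>) x = E (\<mu> \<xi> x)"
  using assms unfolding matched_pair_ENL_def by metis+

lemma matched_pair_ENL_deformed:
  assumes "matched_pair_ENL scg brg E sch brh F \<rho> \<mu>"
  shows "matched_pair scg (deformed brg E) sch (deformed brh F)
           (\<lambda>x \<xi>. \<rho> (E x) \<xi>) (\<lambda>\<xi> x. \<mu> (F \<xi>) x)"
proof -
  have ENL_g: "ENL_algebra scg brg E" and ENL_h: "ENL_algebra sch brh F"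
    and mp: "matched_pair scg brg sch brh \<rho> \<mu>"
    using assms by (simp_all add: matched_pair_ENL_def)
  note compat = matched_pair_ENL_compat[OF assms]
  have \<rho>: "lie_rep scg brg sch \<rho>" and \<mu>: "lie_rep sch brh scg \<mu>"
    and \<rho>_bracket: "\<And>x \<xi> \<eta>. \<rho> x (brh \<xi> \<eta>) =
          brh (\<rho> x \<xi>) \<eta> + brh \<xi> (\<rho> x \<eta>) + \<rho> (\<mu> \<eta> x) \<xi> - \<rho> (\<mu> \<xi> x) \<eta>"
    and \<mu>_bracket: "\<And>\<xi> x y. \<mu> \<xi> (brg x y) =
          brg (\<mu> \<xi> x) y + brg x (\<mu> \<xi> y) + \<mu> (\<rho> y \<xi>) x - \<mu> (\<rho> x \<xi>) y"
    using mp by (simp_all add: matched_pair_def)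
  have E: "Vector_Spaces.linear scg scg E" and F: "Vector_Spaces.linear sch sch F"
    using ENL_g ENL_h by (simp_all add: ENL_algebra_def)
  have E_hom: "E (deformed brg E x y) = brg (E x) (E y)" for x y
    using ENL_g by (simp add: ENL_algebra_def deformed_def)
  have F_hom: "F (deformed brh F \<xi> \<eta>) = brh (F \<xi>) (F \<eta>)" for \<xi> \<eta>
    using ENL_h by (simp add: ENL_algebra_def deformed_def)
  show ?thesis
    unfolding matched_pair_def
  proof (intro conjI allI)
    show "lie_algebra scg (deformed brg E)" "lie_algebra sch (deformed brh F)"
      using ENL_g ENL_h by (simp_all add: ENL_algebra_deformed_lie_algebra)
    show "lie_rep scg (deformed brg E) sch (\<lambda>x \<xi>. \<rho> (E x) \<xi>)"
      by (rule lie_rep_comp_lie_hom[where br' = "deformed brg E", OF \<rho> E E_hom])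
    show "lie_rep sch (deformed brh F) scg (\<lambda>\<xi> x. \<mu> (F \<xi>) x)"
      by (rule lie_rep_comp_lie_hom[where br' = "deformed brh F", OF \<mu> F F_hom])
    show "\<rho> (E x) (deformed brh F \<xi> \<eta>) =
          deformed brh F (\<rho> (E x) \<xi>) \<eta> + deformed brh F \<xi> (\<rho> (E x) \<eta>) +
          \<rho> (E (\<mu> (F \<eta>) x)) \<xi> - \<rho> (E (\<mu> (F \<xi>) x)) \<eta>" for x \<xi> \<eta>
      by (simp add: deformed_def \<rho>_bracket compat)
    show "\<mu> (F \<xi>) (deformed brg E x y) =
          deformed brg E (\<mu> (F \<xi>) x) y + deformed brg E x (\<mu> (F \<xi>) y) +
          \<mu> (F (\<rho> (E y) \<xi>)) x - \<mu> (F (\<rho> (E x) \<xi>)) y" for \<xi> x y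
      by (simp add: deformed_def \<mu>_bracket compat)
  qed
qed

lemma bicrossed_deformed_eq_deformed_bicrossed:
  assumes "matched_pair_ENL scg brg E sch brh F \<rho> \<mu>"
  shows "bicrossed (deformed brg E) (deformed brh F) (\<lambda>x \<xi>. \<rho> (E x) \<xi>) (\<lambda>\<xi> x. \<mu> (F \<xi>) x)
       = deformed (bicrossed brg brh \<rho> \<mu>) (sum_map E F)"
  by (intro ext) (simp add: bicrossed_def deformed_def sum_map_def matched_pair_ENL_compat[OF assms]
      split: prod.splits)

lemma lie_algebra_iso_id: "lie_algebra sc br \<Longrightarrow> lie_algebra_iso sc br sc br id"
  by (simp add: lie_algebra_iso_def lie_algebra_def vector_space.linear_id)

theorem theorem2p5:
  fixes scg :: "'k::field_char_0 \<Rightarrow> 'g::ab_group_add \<Rightarrow> 'g"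
    and sch :: "'k \<Rightarrow> 'h::ab_group_add \<Rightarrow> 'h"
    and brg :: "'g \<Rightarrow> 'g \<Rightarrow> 'g" and E :: "'g \<Rightarrow> 'g"
    and brh :: "'h \<Rightarrow> 'h \<Rightarrow> 'h" and F :: "'h \<Rightarrow> 'h"
    and \<rho> :: "'g \<Rightarrow> 'h \<Rightarrow> 'h" and \<mu> :: "'h \<Rightarrow> 'g \<Rightarrow> 'g"
  assumes "alg_closed_field TYPE('k)"
    and "fin_dim_vs scg" and "fin_dim_vs sch"
    and "matched_pair_ENL scg brg E sch brh F \<rho> \<mu>"
  shows "matched_pair scg (deformed brg E) sch (deformed brh F)
           (\<lambda>x \<xi>. \<rho> (E x) \<xi>) (\<lambda>\<xi> x. \<mu> (F \<xi>) x)
       \<and> lie_algebra_iso (sum_scale scg sch)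
           (bicrossed (deformed brg E) (deformed brh F) (\<lambda>x \<xi>. \<rho> (E x) \<xi>) (\<lambda>\<xi> x. \<mu> (F \<xi>) x))
           (sum_scale scg sch)
           (deformed (bicrossed brg brh \<rho> \<mu>) (sum_map E F))
           id"
proof -
  have deformed_pair: "matched_pair scg (deformed brg E) sch (deformed brh F)
      (\<lambda>x \<xi>. \<rho> (E x) \<xi>) (\<lambda>\<xi> x. \<mu> (F \<xi>) x)"
    using matched_pair_ENL_deformed[OF assms(4)] .
  note iso = lie_algebra_iso_id[OF bicrossed_lie_algebra[OF deformed_pair]]
  show ?thesis
    using deformed_pair iso unfolding bicrossed_deformed_eq_deformed_bicrossed[OF assms(4)] by blast
qed

end
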